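(* Let $(N_n)_{n\in\mathbb{N}}$ be a strictly increasing sequence of natural numbers and let $f_n:\ell_1\to\mathbb{R}$ be defined as below. Then the sequence $(f_n)_{n \in \mathbb{N}}$ does not converge in norm to zero; in fact $\|f_n\|_{FBL[c_0]} = 1$ for every $n \in \mathbb{N}$.
   Context: Identify $c_0^*=\ell_1$ and write $x^*=(x^*_1,x^*_2,\ldots)$. For $n<m$ let $g_{nm}: \ell_1 \to [0,1]$ be any continuous function such that $g_{nm}(x^* ) = 0$ if $N_m|x_n^*| \leq |x_m^*|$, $g_{nm}(x^* ) = 1$ if $|x_m^*| \leq (N_m-1)|x_n^*|$, and $g_{nm}(x^* )=g_{nm}(x^*/\|x^*\|)$ whenever $x^* \neq 0$. Define $$f_n(x^* ) = \big(|x_n^*|-N_n\max\{|x_m^*| : m<n\}\big)^+ \cdot \prod_{m > n}g_{nm}(x^* ),$$ where $r^+=\max\{r,0\}$ and the max over the empty set is $0$. For $f:\ell_1\to\mathbb{R}$, $\|f\|_{FBL[c_0]} = \sup \{\sum_{i = 1}^k |f(x_{i}^{*})| : k \in \mathbb{N},\ x_1^{*}, \ldots, x_k^{*} \in \ell_1,\ \sup_{x \in B_{c_0}} \sum_{i=1}^k |x_i^{*}(x)| \leq 1 \}$, the norm of the free Banach lattice $FBL[c_0]$. *)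

theory Defs
  imports "HOL-Analysis.Analysis"
begin

text \<open>Elements of l_1 = c_0^* are real sequences indexed by nat (index 0 plays the role of
  the paper's index 1) that are absolutely summable.\<close>

definition is_l1 :: "(nat \<Rightarrow> real) \<Rightarrow> bool" where
  "is_l1 x \<longleftrightarrow> summable (\<lambda>i. \<bar>x i\<bar>)"

definition l1norm :: "(nat \<Rightarrow> real) \<Rightarrow> real" where
  "l1norm x = (\<Sum>i. \<bar>x i\<bar>)"

definition c0_ball :: "(nat \<Rightarrow> real) set" where
  "c0_ball = {x. x \<longlonglongrightarrow> 0 \<and> (\<forall>i. \<bar>x i\<bar> \<le> 1)}"

definition pair :: "(nat \<Rightarrow> real) \<Rightarrow> (nat \<Rightarrow> real) \<Rightarrow> real" where
  "pair xs x = (\<Sum>j. xs j * x j)"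

definition l1_continuous_on :: "(nat \<Rightarrow> real) set \<Rightarrow> ((nat \<Rightarrow> real) \<Rightarrow> real) \<Rightarrow> bool" where
  "l1_continuous_on S g \<longleftrightarrow>
     (\<forall>x\<in>S. \<forall>e>0. \<exists>d>0. \<forall>y\<in>S. l1norm (\<lambda>i. y i - x i) < d \<longrightarrow> \<bar>g y - g x\<bar> < e)"

definition fbl_norm :: "((nat \<Rightarrow> real) \<Rightarrow> real) \<Rightarrow> ereal" where
  "fbl_norm f = (SUP xs \<in> {xs :: (nat \<Rightarrow> real) list. xs \<noteq> [] \<and> (\<forall>v\<in>set xs. is_l1 v) \<and>
        (\<forall>x\<in>c0_ball. (\<Sum>v\<leftarrow>xs. \<bar>pair v x\<bar>) \<le> 1)}.
      ereal (\<Sum>v\<leftarrow>xs. \<bar>f v\<bar>))"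

definition admissible_g :: "(nat \<Rightarrow> nat) \<Rightarrow> (nat \<Rightarrow> nat \<Rightarrow> (nat \<Rightarrow> real) \<Rightarrow> real) \<Rightarrow> bool" where
  "admissible_g N g \<longleftrightarrow> (\<forall>n m. n < m \<longrightarrow>
     (\<forall>x. is_l1 x \<longrightarrow> g n m x \<in> {0..1}) \<and>
     l1_continuous_on {x. is_l1 x \<and> (x n \<noteq> 0 \<or> x m \<noteq> 0)} (g n m) \<and>
     (\<forall>x. is_l1 x \<and> (x n \<noteq> 0 \<or> x m \<noteq> 0) \<and> real (N m) * \<bar>x n\<bar> \<le> \<bar>x m\<bar> \<longrightarrow> g n m x = 0) \<and>
     (\<forall>x. is_l1 x \<and> (x n \<noteq> 0 \<or> x m \<noteq> 0) \<and> \<bar>x m\<bar> \<le> (real (N m) - 1) * \<bar>x n\<bar> \<longrightarrow> g n m x = 1) \<and>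
     (\<forall>x. is_l1 x \<and> x \<noteq> (\<lambda>_. 0) \<longrightarrow> g n m x = g n m (\<lambda>i. x i / l1norm x)))"

definition fseq :: "(nat \<Rightarrow> nat) \<Rightarrow> (nat \<Rightarrow> nat \<Rightarrow> (nat \<Rightarrow> real) \<Rightarrow> real) \<Rightarrow> nat \<Rightarrow> (nat \<Rightarrow> real) \<Rightarrow> real" where
  "fseq N g n x =
     max (\<bar>x n\<bar> - real (N n) * (if n = 0 then 0 else Max ((\<lambda>m. \<bar>x m\<bar>) ` {..<n}))) 0
     * prodinf (\<lambda>k. g n (n + 1 + k) x)"

end

theory Submission
  imports Defs
begin

text \<open>Each factor g_{nm} takes values in [0,1], and as x_m \<rightarrow> 0 all but finitely many factors
  equal 1, so the infinite product lies in [0,1] and |f_n(x^*)| \<le> |x^*_n| = |x^*(e_n)|.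
  Since e_n lies in the unit ball of c_0, every admissible family x^*_1, ..., x^*_k gives
  \<Sum>|f_n(x^*_i)| \<le> \<Sum>|x^*_i(e_n)| \<le> 1. Conversely the single functional e_n^* is admissible
  and f_n(e_n^*) = 1: the subtracted term vanishes and every g_{nm}(e_n^*) equals 1.\<close>

lemma pair_indicator_right: "pair v (indicator {n}) = v n"
proof -
  have "(\<lambda>j. v j * indicator {n} j) = (\<lambda>j. if j = n then v j else 0)"
    by auto
  then show ?thesis
    unfolding pair_def using sums_single[of n v] sums_unique by metis
qed

lemma pair_indicator_left: "pair (indicator {n}) x = x n"
proof -
  have "(\<lambda>j. indicator {n} j * x j) = (\<lambda>j. if j = n then x j else 0)"
    by auto
  then show ?thesis
    unfolding pair_def using sums_single[of n x] sums_unique by metis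
qed

lemma is_l1_indicator: "is_l1 (indicator {n})"
proof -
  have "(\<lambda>i. \<bar>indicator {n} i :: real\<bar>) = (\<lambda>i. if i = n then 1 else 0)"
    by auto
  then show ?thesis
    unfolding is_l1_def by simp
qed

lemma indicator_in_c0_ball: "indicator {n} \<in> c0_ball"
proof -
  have "\<forall>\<^sub>F i in sequentially. (indicator {n} i :: real) = 0"
    by (rule eventually_sequentiallyI[of "Suc n"]) auto
  then have "(indicator {n} :: nat \<Rightarrow> real) \<longlonglongrightarrow> 0"
    by (simp add: tendsto_eventually)
  then show ?thesis
    unfolding c0_ball_def by (auto simp: indicator_def)
qed

lemma fbl_norm_le_one_if_dominated:
  assumes x: "x \<in> c0_ball" and dom: "\<And>v. is_l1 v \<Longrightarrow> \<bar>f v\<bar> \<le> \<bar>pair v x\<bar>"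
  shows "fbl_norm f \<le> 1"
  unfolding fbl_norm_def
proof (rule SUP_least, safe)
  fix xs :: "(nat \<Rightarrow> real) list"
  assume l1: "\<forall>v\<in>set xs. is_l1 v" and ball: "\<forall>x\<in>c0_ball. (\<Sum>v\<leftarrow>xs. \<bar>pair v x\<bar>) \<le> 1"
  have "(\<Sum>v\<leftarrow>xs. \<bar>f v\<bar>) \<le> (\<Sum>v\<leftarrow>xs. \<bar>pair v x\<bar>)"
    using l1 dom by (intro sum_list_mono) blast
  also have "\<dots> \<le> 1"
    using ball x by blast
  finally show "ereal (\<Sum>v\<leftarrow>xs. \<bar>f v\<bar>) \<le> 1"
    by simp
qed

lemma fbl_norm_ge_single:
  assumes "is_l1 v" and "\<And>x. x \<in> c0_ball \<Longrightarrow> \<bar>pair v x\<bar> \<le> 1"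
  shows "ereal \<bar>f v\<bar> \<le> fbl_norm f"
proof -
  have "[v] \<in> {xs. xs \<noteq> [] \<and> (\<forall>v\<in>set xs. is_l1 v) \<and>
      (\<forall>x\<in>c0_ball. (\<Sum>v\<leftarrow>xs. \<bar>pair v x\<bar>) \<le> 1)}"
    using assms by simp
  from SUP_upper[OF this, of "\<lambda>xs. ereal (\<Sum>v\<leftarrow>xs. \<bar>f v\<bar>)"] show ?thesis
    unfolding fbl_norm_def by simp
qed

lemma prodinf_in_unit_interval:
  fixes a :: "nat \<Rightarrow> real"
  assumes bounds: "\<And>k. a k \<in> {0..1}" and ev: "\<forall>\<^sub>F k in sequentially. a k = 1"
  shows "prodinf a \<in> {0..1}"
proof -
  obtain M where M: "\<And>k. k \<ge> M \<Longrightarrow> a k = 1"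
    using ev by (auto simp: eventually_sequentially)
  have "prodinf a = (\<Prod>k<M. a k)"
    using M by (intro prodinf_finite) auto
  moreover have "(\<Prod>k<M. a k) \<in> {0..1}"
    using bounds by (auto intro: prod_nonneg prod_le_1)
  ultimately show ?thesis
    by simp
qed

lemma admissible_g_eventually_one:
  assumes N: "strict_mono N" and G: "admissible_g N g" and v: "is_l1 v" and vn: "v n \<noteq> 0"
  shows "\<forall>\<^sub>F m in sequentially. g n m v = 1"
proof -
  have "(\<lambda>i. \<bar>v i\<bar>) \<longlonglongrightarrow> 0"
    using v unfolding is_l1_def by (rule summable_LIMSEQ_zero)
  then have "\<forall>\<^sub>F m in sequentially. \<bar>v m\<bar> < \<bar>v n\<bar>"
    using vn by (intro order_tendstoD(2)[of _ 0]) auto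
  then obtain M where M: "\<And>m. m \<ge> M \<Longrightarrow> \<bar>v m\<bar> < \<bar>v n\<bar>"
    by (auto simp: eventually_sequentially)
  show ?thesis
  proof (rule eventually_sequentiallyI[of "max M (n + 2)"])
    fix m assume m: "max M (n + 2) \<le> m"
    have "real (N m) - 1 \<ge> 1"
      using strict_mono_imp_increasing[OF N, of m] m by simp
    then have "\<bar>v m\<bar> \<le> (real (N m) - 1) * \<bar>v n\<bar>"
      using M[of m] m mult_right_mono[of 1 "real (N m) - 1" "\<bar>v n\<bar>"] by simp
    moreover have "n < m"
      using m by simp
    ultimately show "g n m v = 1"
      using G v vn unfolding admissible_g_def by blast
  qed
qed

lemma fseq_abs_le:
  assumes N: "strict_mono N" and G: "admissible_g N g" and v: "is_l1 v"
  shows "\<bar>fseq N g n v\<bar> \<le> \<bar>v n\<bar>"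
proof -
  define A where "A = real (N n) * (if n = 0 then 0 else Max ((\<lambda>m. \<bar>v m\<bar>) ` {..<n}))"
  define P where "P = prodinf (\<lambda>k. g n (n + 1 + k) v)"
  have "A \<ge> 0"
  proof (cases "n = 0")
    case False
    then have "\<bar>v 0\<bar> \<le> Max ((\<lambda>m. \<bar>v m\<bar>) ` {..<n})"
      by (intro Max_ge) auto
    then show ?thesis
      unfolding A_def by (simp add: order_trans[OF abs_ge_zero])
  qed (simp add: A_def)
  then have pos_part: "0 \<le> max (\<bar>v n\<bar> - A) 0" "max (\<bar>v n\<bar> - A) 0 \<le> \<bar>v n\<bar>"
    by auto
  have f: "fseq N g n v = max (\<bar>v n\<bar> - A) 0 * P"
    unfolding fseq_def A_def P_def ..
  show ?thesis
  proof (cases "v n = 0")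
    case True
    then show ?thesis
      using f pos_part by simp
  next
    case False
    have "\<forall>\<^sub>F k in sequentially. g n (k + (n + 1)) v = 1"
      using admissible_g_eventually_one[OF N G v False] by (rule eventually_sequentially_seg[THEN iffD2])
    then have "P \<in> {0..1}"
      unfolding P_def using G v
      by (intro prodinf_in_unit_interval) (auto simp: admissible_g_def ac_simps)
    then show ?thesis
      using f pos_part mult_mono[of _ "\<bar>v n\<bar>" P 1] by (simp add: abs_mult)
  qed
qed

lemma fseq_indicator:
  assumes N: "strict_mono N" and G: "admissible_g N g"
  shows "fseq N g n (indicator {n}) = 1"
proof -
  have "g n m (indicator {n}) = 1" if "n < m" for m
  proof -
    have "real (N m) - 1 \<ge> 0"
      using strict_mono_imp_increasing[OF N, of m] that by simp
    then show ?thesis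
      using G is_l1_indicator[of n] that unfolding admissible_g_def by auto
  qed
  then have "prodinf (\<lambda>k. g n (n + 1 + k) (indicator {n})) = 1"
    using prodinf_finite[of "{}" "\<lambda>k. g n (n + 1 + k) (indicator {n})"] by simp
  moreover have "n \<noteq> 0 \<Longrightarrow> (\<lambda>m. \<bar>indicator {n} m :: real\<bar>) ` {..<n} = {0}"
    by auto
  ultimately show ?thesis
    unfolding fseq_def by simp
qed

lemma fbl_norm_fseq:
  assumes N: "strict_mono N" and G: "admissible_g N g"
  shows "fbl_norm (fseq N g n) = 1"
proof (rule antisym)
  show "fbl_norm (fseq N g n) \<le> 1"
    using indicator_in_c0_ball[of n]
    by (rule fbl_norm_le_one_if_dominated) (simp add: pair_indicator_right fseq_abs_le[OF N G])
  have "\<bar>pair (indicator {n}) x\<bar> \<le> 1" if "x \<in> c0_ball" for x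
    using that by (simp add: pair_indicator_left c0_ball_def)
  from fbl_norm_ge_single[OF is_l1_indicator this, of "fseq N g n"] show "1 \<le> fbl_norm (fseq N g n)"
    by (simp add: fseq_indicator[OF N G] one_ereal_def)
qed

theorem mainTheorem10:
  fixes N :: "nat \<Rightarrow> nat"
    and g :: "nat \<Rightarrow> nat \<Rightarrow> (nat \<Rightarrow> real) \<Rightarrow> real"
  assumes "strict_mono N"
    and "admissible_g N g"
  shows "\<not> ((\<lambda>n. fbl_norm (fseq N g n)) \<longlonglongrightarrow> 0) \<and> (\<forall>n. fbl_norm (fseq N g n) = 1)"
proof -
  have norms: "\<forall>n. fbl_norm (fseq N g n) = 1"
    using fbl_norm_fseq[OF assms] by blast
  have "\<not> ((\<lambda>n. 1 :: ereal) \<longlonglongrightarrow> 0)"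
    by (simp add: LIMSEQ_const_iff)
  with norms show ?thesis
    by simp
qed

end
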